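(* There exist absolute constants $c,\bar c>0$ such that the following holds. Let $d\ge1$ and let $u\in\mathbb C^n$ be such that there exist disjoint sets $J_1,J_2\subset[n]$ with $|J_1|=|J_2|=m$ and $\rho>0$ with $|u_{j_1}-u_{j_2}|\ge\rho/\sqrt n$ for all $j_1\in J_1$, $j_2\in J_2$. Then $$\mathbb P\Big(\|(S_n^d+Z_n)u\|_2\le c\rho\min\Big\{\sqrt{\tfrac{md}{n}},1\Big\}\Big)\le\exp\big(-\bar c\min(md,n)\big).$$
   Context: $S_n^d=\sum_{\ell=1}^dP_n^\ell$ with $P_n^\ell(i,j)=\mathbf 1(\pi_n^\ell(i)=j)$ for independent uniformly random permutations of $[n]$. $Z_n$ is a deterministic complex $n\times n$ matrix with $Z_n\mathbf 1=\zeta\mathbf 1$, $Z_n^*\mathbf 1=\bar\zeta\mathbf 1$ for some $\zeta\in\mathbb C$ and $\sup\{\|Z_nu\|_2:\|u\|_2=1,u\perp\mathbf 1\}\le n^{\gamma_0}$ for some fixed $\gamma_0\ge1$, where $\mathbf 1$ is the all-ones vector. *)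

theory Defs
  imports "HOL-Probability.Probability"
begin

text \<open>Vectors in C^n are functions nat => complex (indices 0..n-1),
  n x n matrices are functions nat => nat => complex (indices below n).\<close>

definition vnorm :: "nat \<Rightarrow> (nat \<Rightarrow> complex) \<Rightarrow> real" where
  "vnorm n v = sqrt (\<Sum>i<n. (cmod (v i))^2)"

definition mat_vec :: "nat \<Rightarrow> (nat \<Rightarrow> nat \<Rightarrow> complex) \<Rightarrow> (nat \<Rightarrow> complex) \<Rightarrow> (nat \<Rightarrow> complex)" where
  "mat_vec n A v = (\<lambda>i. \<Sum>j<n. A i j * v j)"

definition perm_mat :: "(nat \<Rightarrow> nat) \<Rightarrow> nat \<Rightarrow> nat \<Rightarrow> complex" where
  "perm_mat p i j = (if p i = j then 1 else 0)"

definition S_mat :: "nat \<Rightarrow> (nat \<Rightarrow> nat \<Rightarrow> nat) \<Rightarrow> nat \<Rightarrow> nat \<Rightarrow> complex" where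
  "S_mat d ps i j = (\<Sum>l<d. perm_mat (ps l) i j)"

definition perm_tuples :: "nat \<Rightarrow> nat \<Rightarrow> (nat \<Rightarrow> nat \<Rightarrow> nat) set" where
  "perm_tuples n d = PiE {..<d} (\<lambda>_. {p. p permutes {..<n}})"

definition perm_space :: "nat \<Rightarrow> nat \<Rightarrow> (nat \<Rightarrow> nat \<Rightarrow> nat) pmf" where
  "perm_space n d = pmf_of_set (perm_tuples n d)"

end

theory Submission
  imports Defs
begin

text \<open>
  The proof is a switching argument. Row i of (S + Z) u is the sum of the values
  u (\<sigma> l i) over the d permutations plus (Z u) i. Label
  J1 = {a k} and J2 = {b k}; switching a cell (l, k) composes \<sigma> l with
  the transposition of a k and b k. Switching a set E of cells is an involution of the
  space of permutation tuples, so the probability of the bad event B equals the average,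
  over tuples \<sigma>, of the fraction of the 2^(md) switchings of \<sigma> that lie in B.

  If \<sigma> l i = a k then switching (l, k) moves row i by u (b k) - u (a k), of
  modulus at least \<rho> / sqrt n = 2 h. Choosing a set I of such rows whose cells do not
  interact (possible with |I| at least a third of all rows hitting J1), every edge of the
  switching cube in direction of the cell of i has an endpoint where row i is at least h.
  On B fewer than k / 3025 rows are that large, k = min (m d) n, so only a binomial tail
  fraction e^(-|I|/8) of the cube lies in B. Tuples in which at most k / 16 rows hit J1
  are themselves rare (probability at most e^(-k)), and both bounds combine to
  e^(-k / 10000).
\<close>

lemma exists_card_fiber_le_one:
  fixes g :: "'a \<Rightarrow> 'a"
  assumes "finite R" "R \<noteq> {}"
  shows "\<exists>v\<in>R. card {w\<in>R. g w = v} \<le> 1"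
proof (rule ccontr)
  assume "\<not> ?thesis"
  then have "(\<Sum>v\<in>R. (2::nat)) \<le> (\<Sum>v\<in>R. card {w\<in>R. g w = v})"
    by (intro sum_mono) auto
  also have "\<dots> = card (\<Union>v\<in>R. {w\<in>R. g w = v})"
    by (rule card_UN_disjoint[symmetric]) (use assms in auto)
  also have "\<dots> \<le> card R" using assms by (intro card_mono) auto
  finally show False using assms by (simp add: card_gt_0_iff)
qed

lemma large_subset_avoiding_image:
  fixes g :: "'a \<Rightarrow> 'a"
  assumes "finite R" "\<forall>i\<in>R. g i \<noteq> i"
  shows "\<exists>I\<subseteq>R. card R \<le> 3 * card I \<and> (\<forall>i\<in>I. g i \<notin> I)"
  using assms
proof (induction "card R" arbitrary: R rule: less_induct)
  case less
  show ?case
  proof (cases "R = {}")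
    case True then show ?thesis by auto
  next
    case False
    \<comment> \<open>keep a point v with at most one preimage and discard v, g v and that preimage\<close>
    obtain v where v: "v \<in> R" "card {w\<in>R. g w = v} \<le> 1"
      using exists_card_fiber_le_one[OF less.prems(1) False] by blast
    define W where "W = {w\<in>R. g w = v}"
    define R' where "R' = R - {v, g v} - W"
    have fR': "finite R'" using less.prems unfolding R'_def by auto
    have "card R' < card R" unfolding R'_def using v less.prems
      by (intro psubset_card_mono) auto
    then obtain I' where I': "I' \<subseteq> R'" "card R' \<le> 3 * card I'" "\<forall>i\<in>I'. g i \<notin> I'"
      using less.hyps[of R'] fR' less.prems unfolding R'_def by auto
    define I where "I = insert v I'"
    have vI': "v \<notin> I'" using I' unfolding R'_def by auto
    have "R \<subseteq> R' \<union> ({v, g v} \<union> W)" unfolding R'_def by auto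
    hence "card R \<le> card (R' \<union> ({v, g v} \<union> W))" using less.prems fR' unfolding W_def
      by (intro card_mono) auto
    also have "\<dots> \<le> card R' + card ({v, g v} \<union> W)" by (rule card_Un_le)
    also have "card ({v, g v} \<union> W) \<le> card {v, g v} + card W" by (rule card_Un_le)
    also have "card {v, g v} \<le> 2" by (simp add: card_insert_le_m1)
    finally have "card R \<le> card R' + 3" using v unfolding W_def by linarith
    moreover have "card I = card I' + 1" unfolding I_def using vI' I' fR'
      by (simp add: finite_subset)
    moreover have "\<forall>i\<in>I. g i \<notin> I"
    proof
      fix i assume "i \<in> I"
      show "g i \<notin> I"
      proof (cases "i = v")
        case True
        then show ?thesis using I' less.prems v unfolding I_def R'_def by auto
      next
        case False
        hence "i \<in> I'" using \<open>i \<in> I\<close> I_def by auto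
        hence "g i \<noteq> v" using I' unfolding W_def R'_def by auto
        then show ?thesis using I' \<open>i \<in> I'\<close> unfolding I_def by auto
      qed
    qed
    moreover have "I \<subseteq> R" using I' v unfolding I_def R'_def by auto
    ultimately show ?thesis using I' by (intro exI[of _ I]) auto
  qed
qed

lemma card_subsets_split:
  assumes "finite X" "D \<subseteq> X"
  shows "card {E. E \<subseteq> X \<and> P E} = (\<Sum>E2\<in>Pow (X - D). card {E1. E1 \<subseteq> D \<and> P (E1 \<union> E2)})"
proof -
  have "bij_betw (\<lambda>E. (E - D, E \<inter> D)) {E. E \<subseteq> X \<and> P E}
          (Sigma (Pow (X - D)) (\<lambda>E2. {E1. E1 \<subseteq> D \<and> P (E1 \<union> E2)}))"
  proof (rule bij_betw_byWitness[where f' = "\<lambda>(E2, E1). E1 \<union> E2"])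
    show "(\<lambda>E. (E - D, E \<inter> D)) ` {E. E \<subseteq> X \<and> P E}
        \<subseteq> Sigma (Pow (X - D)) (\<lambda>E2. {E1. E1 \<subseteq> D \<and> P (E1 \<union> E2)})"
    proof
      fix z assume "z \<in> (\<lambda>E. (E - D, E \<inter> D)) ` {E. E \<subseteq> X \<and> P E}"
      then obtain E where "E \<subseteq> X" "P E" "z = (E - D, E \<inter> D)" by auto
      moreover have "E \<inter> D \<union> (E - D) = E" by auto
      ultimately show "z \<in> Sigma (Pow (X - D)) (\<lambda>E2. {E1. E1 \<subseteq> D \<and> P (E1 \<union> E2)})" by auto
    qed
    show "(\<lambda>(E2, E1). E1 \<union> E2) ` Sigma (Pow (X - D)) (\<lambda>E2. {E1. E1 \<subseteq> D \<and> P (E1 \<union> E2)})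
        \<subseteq> {E. E \<subseteq> X \<and> P E}"
      using assms by auto
  qed auto
  hence "card {E. E \<subseteq> X \<and> P E} = card (Sigma (Pow (X - D)) (\<lambda>E2. {E1. E1 \<subseteq> D \<and> P (E1 \<union> E2)}))"
    by (rule bij_betw_same_card)
  also have "\<dots> = (\<Sum>E2\<in>Pow (X - D). card {E1. E1 \<subseteq> D \<and> P (E1 \<union> E2)})"
    using assms by (intro card_SigmaI) (auto intro: finite_subset[of _ "Pow D"] finite_subset)
  finally show ?thesis .
qed

lemma card_subsets_card_less:
  assumes "finite I"
  shows "card {S. S \<subseteq> I \<and> card S < q} = (\<Sum>j<q. card I choose j)"
proof -
  have "{S. S \<subseteq> I \<and> card S < q} = (\<Union>j<q. {S. S \<subseteq> I \<and> card S = j})" by auto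
  also have "card \<dots> = (\<Sum>j<q. card {S. S \<subseteq> I \<and> card S = j})"
    using assms by (intro card_UN_disjoint) (auto intro: finite_subset)
  also have "\<dots> = (\<Sum>j<q. card I choose j)" using assms by (simp add: n_subsets)
  finally show ?thesis .
qed

lemma sum_choose_less_le: "real (\<Sum>j<q. r choose j) \<le> 8 ^ q * (9/8) ^ r"
proof -
  have "real (\<Sum>j<q. r choose j) \<le> (\<Sum>j<q. real (r choose j) * (8 ^ q * (1/8) ^ j))"
    unfolding of_nat_sum
  proof (intro sum_mono)
    fix j assume "j \<in> {..<q}"
    hence "(8::real) ^ j \<le> 8 ^ q" by (intro power_increasing) auto
    hence "1 \<le> (8::real) ^ q * (1/8) ^ j" by (simp add: power_one_over field_simps)
    thus "real (r choose j) \<le> real (r choose j) * (8 ^ q * (1/8) ^ j)"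
      by (metis mult.right_neutral mult_left_mono of_nat_0_le_iff)
  qed
  also have "\<dots> = (\<Sum>j\<in>{..<q} \<inter> {..r}. real (r choose j) * (8 ^ q * (1/8) ^ j))"
    by (intro sum.mono_neutral_right) auto
  also have "\<dots> \<le> (\<Sum>j\<le>r. real (r choose j) * (8 ^ q * (1/8) ^ j))"
    by (intro sum_mono2) auto
  also have "\<dots> = 8 ^ q * (\<Sum>j\<le>r. real (r choose j) * (1/8) ^ j * 1 ^ (r - j))"
    by (simp add: sum_distrib_left mult_ac)
  also have "\<dots> = 8 ^ q * (1/8 + 1) ^ r"
    by (simp only: binomial_ring)
  finally show ?thesis by simp
qed

lemma binomial_tail_le_exp:
  "real (\<Sum>j< r div 8 + 1. r choose j) / 2 ^ r \<le> 8 * exp (- real (r div 8))"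
proof -
  define a where "a = r div 8"
  have ar: "8 * a \<le> r" unfolding a_def by simp
  have "real (\<Sum>j< a + 1. r choose j) / 2 ^ r \<le> 8 ^ (a + 1) * (9/8) ^ r / 2 ^ r"
    by (intro divide_right_mono sum_choose_less_le) auto
  also have "\<dots> = 8 ^ (a + 1) * (9/16) ^ r"
  proof -
    have "(2::real) ^ r * 8 ^ r = 16 ^ r" by (simp add: power_mult_distrib[symmetric])
    thus ?thesis by (simp add: power_divide field_simps)
  qed
  also have "\<dots> \<le> 8 ^ (a + 1) * (9/16) ^ (8 * a)"
    using ar by (intro mult_left_mono power_decreasing) auto
  also have "\<dots> = 8 * (8 * (9/16) ^ 8) ^ a" by (simp add: power_mult power_mult_distrib)
  also have "\<dots> \<le> 8 * (1/12) ^ a" by (intro mult_left_mono power_mono) (auto simp: power_divide)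
  also have "\<dots> \<le> 8 * exp (- real a)"
  proof -
    have "exp (real a) = exp 1 ^ a" by (simp add: exp_of_nat_mult[symmetric])
    also have "\<dots> \<le> 12 ^ a" using exp_le by (intro power_mono) auto
    finally show ?thesis by (simp add: exp_minus power_one_over field_simps)
  qed
  finally show ?thesis unfolding a_def .
qed

lemma power_self_le_fact: "real s ^ s \<le> 3 ^ s * fact s"
proof (induction s)
  case 0 then show ?case by simp
next
  case (Suc s)
  show ?case
  proof (cases "s = 0")
    case True then show ?thesis by simp
  next
    case False
    have "(1 + 1 / real s) ^ s \<le> exp (1 / real s) ^ s"
      by (intro power_mono) (auto simp: exp_ge_add_one_self add.commute)
    also have "\<dots> = exp 1" using False by (simp add: exp_of_nat_mult[symmetric])
    also have "\<dots> \<le> 3" by (rule exp_le)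
    finally have e: "(1 + 1 / real s) ^ s \<le> 3" .
    have "real (Suc s) ^ s = real s ^ s * (1 + 1 / real s) ^ s"
      using False by (simp add: power_mult_distrib[symmetric] field_simps)
    also have "\<dots> \<le> real s ^ s * 3" by (intro mult_left_mono e) auto
    also have "\<dots> \<le> 3 * (3 ^ s * fact s)" using Suc.IH by simp
    finally have "real (Suc s) * real (Suc s) ^ s \<le> real (Suc s) * (3 ^ Suc s * fact s)"
      by (intro mult_left_mono) auto
    then show ?thesis by (simp add: mult_ac)
  qed
qed

lemma choose_mult_fact_le_power:
  assumes "s \<le> n"
  shows "real (n choose s) * fact s \<le> real n ^ s"
proof -
  have "fact n = fact (n - s) * ((n choose s) * fact s)"
    using binomial_fact_lemma[OF assms] by (simp add: mult_ac)
  hence "(n choose s) * fact s \<le> n ^ s" using fact_div_fact_le_pow[OF assms] by simp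
  hence "real ((n choose s) * fact s) \<le> real (n ^ s)" by (simp only: of_nat_le_iff)
  thus ?thesis by simp
qed

lemma three_power_le_sixteen_power:
  assumes "16 * s \<le> k"
  shows "(3::nat) ^ (s + k) \<le> 16 ^ (k - s)"
proof -
  have "(3::nat) ^ (s + k) \<le> 3 ^ (2 * k)" using assms by (intro power_increasing) auto
  also have "\<dots> = 9 ^ k" by (simp add: power_mult)
  finally have a: "(3::nat) ^ (s + k) \<le> 9 ^ k" .
  have "(9 ^ k) ^ 16 = ((9::nat) ^ 16) ^ k" by (metis power_mult mult.commute)
  also have "\<dots> \<le> (16 ^ 15) ^ k" by (intro power_mono) auto
  also have "\<dots> = 16 ^ (15 * k)" by (simp add: power_mult)
  also have "\<dots> \<le> 16 ^ (16 * (k - s))" using assms by (intro power_increasing) auto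
  also have "\<dots> = (16 ^ (k - s)) ^ 16" by (simp add: power_mult[symmetric] mult.commute)
  finally have "((9::nat) ^ k) ^ 16 \<le> (16 ^ (k - s)) ^ 16" .
  hence "(9::nat) ^ k \<le> 16 ^ (k - s)" using power_mono_iff[of "(9::nat) ^ k" "16 ^ (k - s)" 16] by simp
  with a show ?thesis by simp
qed

lemma choose_mult_power_le_exp:
  assumes "16 * s \<le> k" "k \<le> n" "k \<le> M" "n > 0"
  shows "real (n choose s) * (real s / real n) ^ M \<le> exp (- real k)"
proof -
  have sn: "s \<le> n" "s \<le> M" using assms by auto
  have r: "real s / real n \<le> 1/16" using assms by (simp add: field_simps)
  have "real (n choose s) * real s ^ s \<le> real (n choose s) * (3 ^ s * fact s)"
    by (intro mult_left_mono power_self_le_fact) auto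
  also have "\<dots> = 3 ^ s * (real (n choose s) * fact s)" by simp
  also have "\<dots> \<le> 3 ^ s * real n ^ s" by (intro mult_left_mono choose_mult_fact_le_power sn) auto
  finally have c1: "real (n choose s) * real s ^ s / real n ^ s \<le> 3 ^ s"
    using assms(4) by (simp add: divide_le_eq)
  have "real (n choose s) * (real s / real n) ^ M
      = (real (n choose s) * real s ^ s / real n ^ s) * (real s / real n) ^ (M - s)"
    using sn by (simp add: power_divide flip: power_add)
  also have "\<dots> \<le> 3 ^ s * (real s / real n) ^ (M - s)"
    by (intro mult_right_mono c1) auto
  also have "\<dots> \<le> 3 ^ s * (1/16) ^ (M - s)"
    by (intro mult_left_mono power_mono r) auto
  also have "\<dots> \<le> 3 ^ s * (1/16) ^ (k - s)"
    using assms by (intro mult_left_mono power_decreasing) auto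
  also have "\<dots> \<le> (1/3) ^ k"
  proof -
    have "real ((3::nat) ^ (s + k)) \<le> real (16 ^ (k - s))"
      using three_power_le_sixteen_power[OF assms(1)] by (simp only: of_nat_le_iff)
    hence "(3::real) ^ s * 3 ^ k \<le> 16 ^ (k - s)" by (simp add: power_add)
    thus ?thesis by (simp add: power_one_over field_simps)
  qed
  also have "\<dots> \<le> exp (- real k)"
  proof -
    have "exp (real k) = exp 1 ^ k" by (simp add: exp_of_nat_mult[symmetric])
    also have "\<dots> \<le> 3 ^ k" by (intro power_mono exp_le) auto
    finally show ?thesis by (simp add: exp_minus power_one_over field_simps)
  qed
  finally show ?thesis .
qed

section \<open>Permutations with a prescribed preimage\<close>

definition perms_preimage_within :: "'a set \<Rightarrow> 'a set \<Rightarrow> 'a set \<Rightarrow> ('a \<Rightarrow> 'a) set" where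
  "perms_preimage_within N U A = {p. p permutes N \<and> (\<forall>i\<in>N. p i \<in> A \<longrightarrow> i \<in> U)}"

lemma finite_perms_preimage_within: "finite N \<Longrightarrow> finite (perms_preimage_within N U A)"
  unfolding perms_preimage_within_def by (rule finite_subset[OF _ finite_permutations]) auto

lemma transpose_comp_in_perms_preimage_within:
  assumes "y \<in> N" "y \<notin> A" "a \<in> N" "a \<notin> A" and p: "p \<in> perms_preimage_within N U (insert a A)"
  shows "Transposition.transpose a y \<circ> p \<in> perms_preimage_within N U A"
proof -
  have "Transposition.transpose a y \<circ> p permutes N"
    using p assms(1,3) unfolding perms_preimage_within_def by (auto intro: permutes_compose permutes_swap_id)
  moreover have "i \<in> U" if "i \<in> N" "Transposition.transpose a y (p i) \<in> A" for i
  proof -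
    have "p i \<in> A" using that(2) assms(2,4) by (cases "p i = a"; cases "p i = y"; auto)
    thus "i \<in> U" using p that(1) unfolding perms_preimage_within_def by auto
  qed
  ultimately show ?thesis unfolding perms_preimage_within_def by auto
qed

lemma card_image_diff_perms_preimage_within:
  assumes p: "p \<in> perms_preimage_within N U A" and A: "A \<subseteq> N" "finite A"
  shows "card (p ` U - A) = card U - card A"
proof -
  have pN: "p permutes N" using p unfolding perms_preimage_within_def by auto
  have "A \<subseteq> p ` U"
  proof
    fix x assume x: "x \<in> A"
    then obtain i where i: "i \<in> N" "p i = x" using A pN permutes_image by (metis imageE subsetD)
    hence "i \<in> U" using p x unfolding perms_preimage_within_def by auto
    thus "x \<in> p ` U" using i by auto
  qed
  moreover have "card (p ` U) = card U"
    using card_image[OF inj_on_subset[OF permutes_inj[OF pN] subset_UNIV]] by simp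
  ultimately show ?thesis using A(2) by (simp add: card_Diff_subset)
qed

text \<open>Double counting of the pairs (p, y) for which the transposition of a and y, composed
  with p, turns a permutation admissible for A into one admissible for insert a A.\<close>

lemma card_perms_preimage_within_insert:
  assumes N: "finite N" "U \<subseteq> N" "insert a A \<subseteq> N" "a \<notin> A"
  shows "(card N - card A) * card (perms_preimage_within N U (insert a A))
    \<le> (card U - card A) * card (perms_preimage_within N U A)"
proof -
  let ?F = "perms_preimage_within N U" and ?t = "Transposition.transpose a"
  define Q where "Q = {(p, y). p \<in> ?F A \<and> y \<in> N - A \<and> ?t y \<circ> p \<in> ?F (insert a A)}"
  have fA: "finite A" using N(3) by (intro finite_subset[OF _ N(1)]) auto
  have tt: "?t y \<circ> (?t y \<circ> p) = p" for y p by (simp add: fun_eq_iff)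
  have "inj_on (\<lambda>(y, p). (?t y \<circ> p, y)) ((N - A) \<times> ?F (insert a A))"
    by (rule inj_onI) (clarsimp, metis tt)
  moreover have "(\<lambda>(y, p). (?t y \<circ> p, y)) ` ((N - A) \<times> ?F (insert a A)) \<subseteq> Q"
  proof clarify
    fix y p assume "y \<in> N" "y \<notin> A" "p \<in> ?F (insert a A)"
    thus "(?t y \<circ> p, y) \<in> Q"
      using N(3,4) tt[of y p] transpose_comp_in_perms_preimage_within[of y N A a p U]
      unfolding Q_def by auto
  qed
  moreover have "finite Q"
    by (rule finite_subset[of _ "?F A \<times> N"])
       (use N in \<open>auto simp: Q_def finite_perms_preimage_within\<close>)
  ultimately have "card ((N - A) \<times> ?F (insert a A)) \<le> card Q"
    using card_inj_on_le by blast
  hence low: "(card N - card A) * card (?F (insert a A)) \<le> card Q"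
    using N fA by (simp add: card_Diff_subset card_cartesian_product)
  have "Q \<subseteq> Sigma (?F A) (\<lambda>p. p ` U - A)"
  proof
    fix z assume "z \<in> Q"
    then obtain p y where z: "z = (p, y)" and p: "p \<in> ?F A" and y: "y \<in> N" "y \<notin> A"
      and t: "?t y \<circ> p \<in> ?F (insert a A)"
      unfolding Q_def by auto
    have "p permutes N" using p unfolding perms_preimage_within_def by auto
    then obtain i where i: "i \<in> N" "p i = y" using y permutes_image by (metis imageE)
    have "(?t y \<circ> p) i = a" using i by simp
    hence "i \<in> U" using t i unfolding perms_preimage_within_def by auto
    thus "z \<in> Sigma (?F A) (\<lambda>p. p ` U - A)" using z p y i by auto
  qed
  hence "card Q \<le> card (Sigma (?F A) (\<lambda>p. p ` U - A))"
    by (rule card_mono[rotated])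
       (use N in \<open>auto intro: finite_SigmaI finite_perms_preimage_within finite_subset\<close>)
  also have "\<dots> = (\<Sum>p\<in>?F A. card (p ` U - A))"
    using N by (intro card_SigmaI finite_perms_preimage_within) (auto intro: finite_subset)
  also have "\<dots> = (card U - card A) * card (?F A)"
    using N(3) fA by (simp add: card_image_diff_perms_preimage_within)
  finally show ?thesis using low by linarith
qed

lemma card_perms_preimage_within_le:
  assumes N: "finite N" "U \<subseteq> N" "A \<subseteq> N"
  shows "real (card (perms_preimage_within N U A))
    \<le> (real (card U) / real (card N)) ^ card A * fact (card N)"
proof -
  have "finite A" using N(3) by (intro finite_subset[OF _ N(1)]) auto
  then show ?thesis using N(3)
  proof (induction A rule: finite_induct)
    case empty
    then show ?case using N by (simp add: perms_preimage_within_def card_permutations)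
  next
    case (insert a A)
    let ?F = "perms_preimage_within N U" and ?n = "card N" and ?s = "card U" and ?j = "card A"
    have jn: "?j < ?n" using insert N by (metis psubsetI psubset_card_mono insert_subset)
    have sn: "?s \<le> ?n" using N by (simp add: card_mono)
    have "real (?n - ?j) * card (?F (insert a A)) \<le> real (?s - ?j) * card (?F A)"
      using card_perms_preimage_within_insert[of N U a A] insert N
      by (metis insert_subset of_nat_le_iff of_nat_mult)
    hence "card (?F (insert a A)) \<le> real (?s - ?j) / real (?n - ?j) * card (?F A)"
      using jn by (simp add: field_simps)
    also have "real (?s - ?j) / real (?n - ?j) \<le> real ?s / real ?n"
    proof (cases "?j \<le> ?s")
      case True
      have "real (?s - ?j) * real ?n \<le> real ?s * real (?n - ?j)"
        using True jn sn by (simp add: of_nat_diff algebra_simps mult_left_mono)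
      thus ?thesis using jn by (simp add: field_simps)
    qed simp
    hence "real (?s - ?j) / real (?n - ?j) * card (?F A) \<le> real ?s / real ?n * card (?F A)"
      by (intro mult_right_mono) auto
    also have "\<dots> \<le> real ?s / real ?n * ((real ?s / real ?n) ^ ?j * fact ?n)"
      using insert by (intro mult_left_mono) auto
    finally show ?case using insert by (simp add: mult_ac)
  qed
qed

section \<open>Switchings of permutation tuples\<close>

locale switching =
  fixes n d m :: nat and a b :: "nat \<Rightarrow> nat" and u w :: "nat \<Rightarrow> complex" and h :: real
  assumes a_inj: "inj_on a {..<m}" and b_inj: "inj_on b {..<m}"
    and a_range: "a ` {..<m} \<subseteq> {..<n}" and b_range: "b ` {..<m} \<subseteq> {..<n}"
    and a_b_disjoint: "a ` {..<m} \<inter> b ` {..<m} = {}"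
    and jump: "\<forall>k<m. 2 * h \<le> cmod (u (a k) - u (b k))"
begin

definition swap_pairs :: "nat set \<Rightarrow> nat \<Rightarrow> nat" where
  "swap_pairs F x = (if x \<in> a ` F then b (the_inv_into {..<m} a x)
              else if x \<in> b ` F then a (the_inv_into {..<m} b x) else x)"

lemma a_neq_b: "k < m \<Longrightarrow> k' < m \<Longrightarrow> a k \<noteq> b k'"
  using a_b_disjoint by auto

lemma n_pos: "0 < m \<Longrightarrow> 0 < n"
  using a_range by fastforce

lemma swap_pairs_a:
  assumes F: "F \<subseteq> {..<m}" and k: "k < m"
  shows "swap_pairs F (a k) = (if k \<in> F then b k else a k)"
proof (cases "k \<in> F")
  case True
  have "the_inv_into {..<m} a (a k) = k" using a_inj k by (simp add: the_inv_into_f_f)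
  then show ?thesis using True unfolding swap_pairs_def by auto
next
  case False
  have "a k \<notin> a ` F" using False a_inj F k by (auto dest: inj_onD)
  moreover have "a k \<notin> b ` F" using F k a_neq_b by auto
  ultimately show ?thesis using False unfolding swap_pairs_def by auto
qed

lemma swap_pairs_b:
  assumes F: "F \<subseteq> {..<m}" and k: "k < m"
  shows "swap_pairs F (b k) = (if k \<in> F then a k else b k)"
proof -
  have na: "b k \<notin> a ` F" using F k a_neq_b by fastforce
  show ?thesis
  proof (cases "k \<in> F")
    case True
    have "the_inv_into {..<m} b (b k) = k" using b_inj k by (simp add: the_inv_into_f_f)
    then show ?thesis using True na unfolding swap_pairs_def by auto
  next
    case False
    have "b k \<notin> b ` F" using False b_inj F k by (auto dest: inj_onD)
    then show ?thesis using False na unfolding swap_pairs_def by auto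
  qed
qed

lemma swap_pairs_other: "F \<subseteq> {..<m} \<Longrightarrow> x \<notin> a ` {..<m} \<Longrightarrow> x \<notin> b ` {..<m} \<Longrightarrow> swap_pairs F x = x"
  unfolding swap_pairs_def by auto

lemma point_cases:
  obtains k where "k < m" "x = a k" | k where "k < m" "x = b k"
    | "x \<notin> a ` {..<m}" "x \<notin> b ` {..<m}"
  by blast

lemma swap_pairs_swap_pairs: "F \<subseteq> {..<m} \<Longrightarrow> swap_pairs F (swap_pairs F x) = x"
  by (cases x rule: point_cases) (simp_all add: swap_pairs_a swap_pairs_b swap_pairs_other)

lemma swap_pairs_permutes:
  assumes F: "F \<subseteq> {..<m}"
  shows "swap_pairs F permutes {..<n}"
  unfolding permutes_def
proof (intro conjI allI impI)
  fix x assume "x \<notin> {..<n}"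
  hence "x \<notin> a ` {..<m}" "x \<notin> b ` {..<m}" using a_range b_range by auto
  thus "swap_pairs F x = x" using F by (intro swap_pairs_other)
next
  fix y show "\<exists>!x. swap_pairs F x = y"
    by (metis F swap_pairs_swap_pairs)
qed

abbreviation tuples :: "(nat \<Rightarrow> nat \<Rightarrow> nat) set" where
  "tuples \<equiv> perm_tuples n d"

definition cells :: "(nat \<times> nat) set" where
  "cells = {..<d} \<times> {..<m}"

definition layer :: "(nat \<times> nat) set \<Rightarrow> nat \<Rightarrow> nat set" where
  "layer E l = {k. (l, k) \<in> E}"

definition switch :: "(nat \<times> nat) set \<Rightarrow> (nat \<Rightarrow> nat \<Rightarrow> nat) \<Rightarrow> (nat \<Rightarrow> nat \<Rightarrow> nat)" where
  "switch E \<sigma> = (\<lambda>l. if l < d then swap_pairs (layer E l) \<circ> \<sigma> l else \<sigma> l)"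

lemma layer_subset: "E \<subseteq> cells \<Longrightarrow> layer E l \<subseteq> {..<m}"
  unfolding layer_def cells_def by auto

lemma mem_tuples_iff:
  "\<sigma> \<in> tuples \<longleftrightarrow> (\<forall>l<d. \<sigma> l permutes {..<n}) \<and> (\<forall>l. l \<ge> d \<longrightarrow> \<sigma> l = undefined)"
  unfolding perm_tuples_def PiE_def extensional_def by auto

lemma tuples_permutes: "\<sigma> \<in> tuples \<Longrightarrow> l < d \<Longrightarrow> \<sigma> l permutes {..<n}"
  by (simp add: mem_tuples_iff)

lemma tuples_inj: "\<sigma> \<in> tuples \<Longrightarrow> l < d \<Longrightarrow> \<sigma> l x = \<sigma> l y \<Longrightarrow> x = y"
  using tuples_permutes permutes_inj by (metis injD)

lemma switch_in_tuples: "E \<subseteq> cells \<Longrightarrow> \<sigma> \<in> tuples \<Longrightarrow> switch E \<sigma> \<in> tuples"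
  unfolding mem_tuples_iff switch_def
  by (auto intro!: permutes_compose swap_pairs_permutes layer_subset)

lemma switch_switch: "E \<subseteq> cells \<Longrightarrow> switch E (switch E \<sigma>) = \<sigma>"
  unfolding switch_def using swap_pairs_swap_pairs[OF layer_subset] by (auto simp: fun_eq_iff)

lemma finite_tuples: "finite tuples"
  unfolding perm_tuples_def by (intro finite_PiE) (auto intro: finite_permutations)

lemma card_tuples: "card tuples = fact n ^ d"
  unfolding perm_tuples_def by (simp add: card_PiE card_permutations)

lemma tuples_nonempty: "tuples \<noteq> {}"
proof -
  have "(\<lambda>l. if l < d then id else undefined) \<in> tuples"
    unfolding mem_tuples_iff by (auto intro: permutes_id)
  thus ?thesis by auto
qed

lemma finite_cells: "finite cells"
  unfolding cells_def by auto

lemma card_cells: "card cells = m * d"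
  unfolding cells_def by (simp add: card_cartesian_product)

text \<open>Each switch E is a bijection of the tuples, so for each fixed E exactly
  card (tuples \<inter> B) tuples \<sigma> have switch E \<sigma> in B.\<close>

lemma card_bad_mult_power_eq:
  "card (tuples \<inter> B) * 2 ^ (m * d) = (\<Sum>\<sigma>\<in>tuples. card {E. E \<subseteq> cells \<and> switch E \<sigma> \<in> B})"
proof -
  have "(\<Sum>\<sigma>\<in>tuples. card {E. E \<subseteq> cells \<and> switch E \<sigma> \<in> B})
      = (\<Sum>\<sigma>\<in>tuples. \<Sum>E\<in>Pow cells. if switch E \<sigma> \<in> B then 1 else 0)"
  proof (rule sum.cong[OF refl])
    fix \<sigma>
    have "{E. E \<subseteq> cells \<and> switch E \<sigma> \<in> B} = {E \<in> Pow cells. switch E \<sigma> \<in> B}" by auto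
    thus "card {E. E \<subseteq> cells \<and> switch E \<sigma> \<in> B} = (\<Sum>E\<in>Pow cells. if switch E \<sigma> \<in> B then 1 else 0)"
      using finite_cells by (simp add: sum.If_cases Int_def conj_commute)
  qed
  also have "\<dots> = (\<Sum>E\<in>Pow cells. \<Sum>\<sigma>\<in>tuples. if switch E \<sigma> \<in> B then 1 else 0)"
    by (rule sum.swap)
  also have "\<dots> = (\<Sum>E\<in>Pow cells. card (tuples \<inter> B))"
  proof (rule sum.cong[OF refl])
    fix E assume E: "E \<in> Pow cells"
    have "(\<Sum>\<sigma>\<in>tuples. if switch E \<sigma> \<in> B then 1 else 0) = card {\<sigma> \<in> tuples. switch E \<sigma> \<in> B}"
      using finite_tuples by (simp add: sum.If_cases Int_def)
    also have "\<dots> = card (tuples \<inter> B)"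
    proof (rule bij_betw_same_card)
      show "bij_betw (switch E) {\<sigma> \<in> tuples. switch E \<sigma> \<in> B} (tuples \<inter> B)"
        by (rule bij_betw_byWitness[where f' = "switch E"])
           (use E in \<open>auto simp: switch_switch switch_in_tuples\<close>)
    qed
    finally show "(\<Sum>\<sigma>\<in>tuples. if switch E \<sigma> \<in> B then 1 else 0) = card (tuples \<inter> B)" .
  qed
  also have "\<dots> = card (tuples \<inter> B) * 2 ^ (m * d)"
    using finite_cells by (simp add: card_Pow card_cells)
  finally show ?thesis by simp
qed

section \<open>Rows hitting J1 and the switching cube\<close>

definition entry :: "(nat \<Rightarrow> nat \<Rightarrow> nat) \<Rightarrow> nat \<Rightarrow> complex" where
  "entry \<sigma> i = (\<Sum>l<d. u (\<sigma> l i)) + w i"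

definition large_rows :: "(nat \<Rightarrow> nat \<Rightarrow> nat) \<Rightarrow> nat set" where
  "large_rows \<sigma> = {i. i < n \<and> h \<le> cmod (entry \<sigma> i)}"

definition hit_rows :: "(nat \<Rightarrow> nat \<Rightarrow> nat) \<Rightarrow> nat set" where
  "hit_rows \<sigma> = {i. i < n \<and> (\<exists>l<d. \<exists>k<m. \<sigma> l i = a k)}"

text \<open>For a row i hitting J1, hit_cell chooses a cell (l, k) with \<sigma> l i = a k, and
  partner is the row that \<sigma> l sends to b k; switching that cell exchanges the two rows'
  l-th values.\<close>

definition hit_cell :: "(nat \<Rightarrow> nat \<Rightarrow> nat) \<Rightarrow> nat \<Rightarrow> nat \<times> nat" where
  "hit_cell \<sigma> i = (SOME (l, k). l < d \<and> k < m \<and> \<sigma> l i = a k)"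

definition partner :: "(nat \<Rightarrow> nat \<Rightarrow> nat) \<Rightarrow> nat \<Rightarrow> nat" where
  "partner \<sigma> i = inv (\<sigma> (fst (hit_cell \<sigma> i))) (b (snd (hit_cell \<sigma> i)))"

definition independent :: "(nat \<Rightarrow> nat \<Rightarrow> nat) \<Rightarrow> nat set \<Rightarrow> bool" where
  "independent \<sigma> I \<longleftrightarrow> I \<subseteq> hit_rows \<sigma> \<and> (\<forall>i\<in>I. partner \<sigma> i \<notin> I)"

lemma finite_hit_rows: "finite (hit_rows \<sigma>)"
  unfolding hit_rows_def by auto

lemma hit_cell:
  assumes "i \<in> hit_rows \<sigma>"
  obtains l k where "hit_cell \<sigma> i = (l, k)" "l < d" "k < m" "\<sigma> l i = a k"
proof -
  obtain l k where "l < d" "k < m" "\<sigma> l i = a k" using assms unfolding hit_rows_def by auto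
  hence "\<exists>lk. (case lk of (l, k) \<Rightarrow> l < d \<and> k < m \<and> \<sigma> l i = a k)" by auto
  hence "case hit_cell \<sigma> i of (l, k) \<Rightarrow> l < d \<and> k < m \<and> \<sigma> l i = a k"
    unfolding hit_cell_def by (rule someI_ex)
  thus thesis using that by (cases "hit_cell \<sigma> i") auto
qed

lemma hit_cell_in_cells: "i \<in> hit_rows \<sigma> \<Longrightarrow> hit_cell \<sigma> i \<in> cells"
  by (metis hit_cell cells_def lessThan_iff mem_Sigma_iff)

lemma partner:
  assumes "\<sigma> \<in> tuples" "i \<in> hit_rows \<sigma>" "hit_cell \<sigma> i = (l, k)"
  shows "\<sigma> l (partner \<sigma> i) = b k" "partner \<sigma> i \<noteq> i"
proof -
  obtain l' k' where c: "hit_cell \<sigma> i = (l', k')" "l' < d" "k' < m" "\<sigma> l' i = a k'"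
    using hit_cell[OF assms(2)] .
  hence lk: "l = l'" "k = k'" using assms(3) by auto
  have "\<sigma> l permutes {..<n}" using assms(1) c(2) lk by (simp add: tuples_permutes)
  thus e: "\<sigma> l (partner \<sigma> i) = b k"
    unfolding partner_def using assms(3) permutes_inverses(1) by fastforce
  show "partner \<sigma> i \<noteq> i" using e c lk a_neq_b by auto
qed

lemma inj_on_hit_cell:
  assumes "\<sigma> \<in> tuples"
  shows "inj_on (hit_cell \<sigma>) (hit_rows \<sigma>)"
proof (rule inj_onI)
  fix i j assume ij: "i \<in> hit_rows \<sigma>" "j \<in> hit_rows \<sigma>" "hit_cell \<sigma> i = hit_cell \<sigma> j"
  obtain l k where c: "hit_cell \<sigma> i = (l, k)" "l < d" "\<sigma> l i = a k" using hit_cell[OF ij(1)] by blast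
  obtain l' k' where c': "hit_cell \<sigma> j = (l', k')" "\<sigma> l' j = a k'" using hit_cell[OF ij(2)] by blast
  have "\<sigma> l i = \<sigma> l j" using c c' ij(3) by simp
  thus "i = j" using tuples_inj[OF assms c(2)] by blast
qed

lemma exists_independent:
  assumes "\<sigma> \<in> tuples"
  shows "\<exists>I. independent \<sigma> I \<and> card (hit_rows \<sigma>) \<le> 3 * card I"
  using large_subset_avoiding_image[OF finite_hit_rows, of \<sigma> "partner \<sigma>"] partner(2)[OF assms]
  unfolding independent_def by (metis surj_pair)

lemma card_independent_le:
  assumes "\<sigma> \<in> tuples" "independent \<sigma> I"
  shows "card I \<le> m * d"
proof -
  have IR: "I \<subseteq> hit_rows \<sigma>" using assms unfolding independent_def by auto
  have "card I = card (hit_cell \<sigma> ` I)"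
    using inj_on_subset[OF inj_on_hit_cell[OF assms(1)] IR] by (simp add: card_image)
  also have "\<dots> \<le> card cells" using IR hit_cell_in_cells by (intro card_mono finite_cells) auto
  finally show ?thesis using card_cells by simp
qed

lemma hit_rows_nonempty:
  assumes "\<sigma> \<in> tuples" "0 < m" "0 < d"
  shows "hit_rows \<sigma> \<noteq> {}"
proof -
  have p: "\<sigma> 0 permutes {..<n}" using assms by (simp add: tuples_permutes)
  have "a 0 < n" using a_range assms by auto
  hence "inv (\<sigma> 0) (a 0) < n" using permutes_in_image[OF permutes_inv[OF p]] by auto
  moreover have "\<sigma> 0 (inv (\<sigma> 0) (a 0)) = a 0" using permutes_inverses(1)[OF p] by simp
  ultimately have "inv (\<sigma> 0) (a 0) \<in> hit_rows \<sigma>" unfolding hit_rows_def using assms by auto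
  thus ?thesis by auto
qed

text \<open>The cell (l, k) of another row j of I cannot affect row i: \<sigma> l i = a k would
  force j = i, and \<sigma> l i = b k would make i the partner of j.\<close>

lemma entry_switch_eq:
  assumes \<sigma>: "\<sigma> \<in> tuples" and ind: "independent \<sigma> I" and i: "i \<in> I"
    and E: "E \<subseteq> cells" "E' \<subseteq> cells"
    and eq: "E - hit_cell \<sigma> ` I = E' - hit_cell \<sigma> ` I"
    and iff: "hit_cell \<sigma> i \<in> E \<longleftrightarrow> hit_cell \<sigma> i \<in> E'"
  shows "entry (switch E \<sigma>) i = entry (switch E' \<sigma>) i"
proof -
  have IR: "I \<subseteq> hit_rows \<sigma>" and indI: "\<forall>j\<in>I. partner \<sigma> j \<notin> I"
    using ind unfolding independent_def by auto
  have same: "swap_pairs (layer E l) (\<sigma> l i) = swap_pairs (layer E' l) (\<sigma> l i)" if l: "l < d" for l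
  proof (cases "\<sigma> l i" rule: point_cases)
    case (1 k)
    have "(l, k) \<in> E \<longleftrightarrow> (l, k) \<in> E'"
    proof (cases "(l, k) \<in> hit_cell \<sigma> ` I")
      case True
      then obtain j where j: "j \<in> I" "hit_cell \<sigma> j = (l, k)" by auto
      obtain l' k' where "hit_cell \<sigma> j = (l', k')" "\<sigma> l' j = a k'"
        using hit_cell[of j \<sigma>] j IR by blast
      hence "\<sigma> l j = \<sigma> l i" using j 1 by simp
      hence "j = i" using tuples_inj[OF \<sigma> l] by blast
      thus ?thesis using j iff by simp
    qed (use eq in blast)
    thus ?thesis using 1 swap_pairs_a[OF layer_subset[OF E(1)]] swap_pairs_a[OF layer_subset[OF E(2)]]
      unfolding layer_def by simp
  next
    case (2 k)
    have "(l, k) \<notin> hit_cell \<sigma> ` I"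
    proof
      assume "(l, k) \<in> hit_cell \<sigma> ` I"
      then obtain j where j: "j \<in> I" "hit_cell \<sigma> j = (l, k)" by auto
      have "\<sigma> l (partner \<sigma> j) = \<sigma> l i" using partner(1)[OF \<sigma> _ j(2)] j IR 2 by auto
      hence "partner \<sigma> j = i" using tuples_inj[OF \<sigma> l] by blast
      thus False using indI j i by auto
    qed
    hence "(l, k) \<in> E \<longleftrightarrow> (l, k) \<in> E'" using eq by blast
    thus ?thesis using 2 swap_pairs_b[OF layer_subset[OF E(1)]] swap_pairs_b[OF layer_subset[OF E(2)]]
      unfolding layer_def by simp
  next
    case 3
    thus ?thesis using swap_pairs_other[OF layer_subset[OF E(1)]] swap_pairs_other[OF layer_subset[OF E(2)]]
      by simp
  qed
  show ?thesis unfolding entry_def switch_def by (auto intro!: sum.cong simp: same)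
qed

lemma entry_switch_insert_diff:
  assumes \<sigma>: "\<sigma> \<in> tuples" and i: "i \<in> hit_rows \<sigma>" and E: "E \<subseteq> cells"
    and nE: "hit_cell \<sigma> i \<notin> E" and c: "hit_cell \<sigma> i = (l0, k0)"
  shows "entry (switch (insert (l0, k0) E) \<sigma>) i - entry (switch E \<sigma>) i = u (b k0) - u (a k0)"
proof -
  have d: "l0 < d" "k0 < m" "\<sigma> l0 i = a k0" using hit_cell[OF i] c by (metis prod.inject)+
  have k0: "k0 \<notin> layer E l0" using nE c unfolding layer_def by auto
  have summand: "u (swap_pairs (layer (insert (l0,k0) E) l) (\<sigma> l i)) - u (swap_pairs (layer E l) (\<sigma> l i))
        = (if l = l0 then u (b k0) - u (a k0) else 0)" for l
  proof (cases "l = l0")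
    case True
    have "layer (insert (l0,k0) E) l0 = insert k0 (layer E l0)" unfolding layer_def by auto
    moreover have "swap_pairs (insert k0 (layer E l0)) (a k0) = b k0"
      using swap_pairs_a[of "insert k0 (layer E l0)" k0] layer_subset[OF E] d by auto
    moreover have "swap_pairs (layer E l0) (a k0) = a k0"
      using swap_pairs_a[OF layer_subset[OF E] d(2)] k0 by simp
    ultimately show ?thesis using True d by simp
  next
    case False
    have "layer (insert (l0,k0) E) l = layer E l" unfolding layer_def using False by auto
    thus ?thesis using False by simp
  qed
  have "entry (switch (insert (l0,k0) E) \<sigma>) i - entry (switch E \<sigma>) i
      = (\<Sum>l<d. u (swap_pairs (layer (insert (l0,k0) E) l) (\<sigma> l i)) - u (swap_pairs (layer E l) (\<sigma> l i)))"
    unfolding entry_def switch_def by (simp add: sum_subtractf)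
  also have "\<dots> = u (b k0) - u (a k0)" using d by (simp add: summand)
  finally show ?thesis .
qed

lemma large_entry_switch_insert_or:
  assumes "\<sigma> \<in> tuples" "i \<in> hit_rows \<sigma>" "E \<subseteq> cells" "hit_cell \<sigma> i \<notin> E"
  shows "h \<le> cmod (entry (switch (insert (hit_cell \<sigma> i) E) \<sigma>) i) \<or> h \<le> cmod (entry (switch E \<sigma>) i)"
proof (rule ccontr)
  obtain l0 k0 where c: "hit_cell \<sigma> i = (l0, k0)" "k0 < m" using hit_cell[OF assms(2)] by blast
  assume "\<not> ?thesis"
  hence "cmod (entry (switch (insert (l0, k0) E) \<sigma>) i) + cmod (entry (switch E \<sigma>) i) < 2 * h"
    using c by auto
  moreover have "2 * h \<le> cmod (u (b k0) - u (a k0))"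
    using jump c by (simp add: norm_minus_commute)
  also have "\<dots> = cmod (entry (switch (insert (l0, k0) E) \<sigma>) i - entry (switch E \<sigma>) i)"
    using entry_switch_insert_diff[OF assms c(1)] by simp
  also have "\<dots> \<le> cmod (entry (switch (insert (l0, k0) E) \<sigma>) i) + cmod (entry (switch E \<sigma>) i)"
    by (rule norm_triangle_ineq4)
  ultimately show False by simp
qed

lemma large_entry_switch_union:
  assumes \<sigma>: "\<sigma> \<in> tuples" and ind: "independent \<sigma> I" and i: "i \<in> I"
    and E1: "E1 \<subseteq> hit_cell \<sigma> ` I" and E2: "E2 \<subseteq> cells - hit_cell \<sigma> ` I"
    and side: "hit_cell \<sigma> i \<in> E1 \<longleftrightarrow> h \<le> cmod (entry (switch (insert (hit_cell \<sigma> i) E2) \<sigma>) i)"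
  shows "h \<le> cmod (entry (switch (E1 \<union> E2) \<sigma>) i)"
proof -
  have iR: "i \<in> hit_rows \<sigma>" using i ind unfolding independent_def by auto
  have DX: "hit_cell \<sigma> ` I \<subseteq> cells" using ind hit_cell_in_cells unfolding independent_def by auto
  have E12: "E1 \<union> E2 \<subseteq> cells" using E1 DX E2 by auto
  have ni: "hit_cell \<sigma> i \<notin> E2" using i E2 by auto
  show ?thesis
  proof (cases "hit_cell \<sigma> i \<in> E1")
    case True
    have "entry (switch (E1 \<union> E2) \<sigma>) i = entry (switch (insert (hit_cell \<sigma> i) E2) \<sigma>) i"
      by (rule entry_switch_eq[OF \<sigma> ind i E12]) (use E1 E2 DX i True in auto)
    thus ?thesis using True side by simp
  next
    case False
    have "entry (switch (E1 \<union> E2) \<sigma>) i = entry (switch E2 \<sigma>) i"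
      by (rule entry_switch_eq[OF \<sigma> ind i E12]) (use E1 E2 i False in auto)
    moreover have "h \<le> cmod (entry (switch E2 \<sigma>) i)"
      using large_entry_switch_insert_or[OF \<sigma> iR _ ni] E2 False side by auto
    ultimately show ?thesis by simp
  qed
qed

text \<open>psi E1 records, for each i in I, on which side of the edge in direction hit_cell i
  the switching E1 lies; psi is injective and, by the previous lemma, lands in the large
  rows.\<close>

lemma card_cube_few_large_le:
  assumes \<sigma>: "\<sigma> \<in> tuples" and ind: "independent \<sigma> I" and E2: "E2 \<subseteq> cells - hit_cell \<sigma> ` I"
  shows "card {E1. E1 \<subseteq> hit_cell \<sigma> ` I \<and> card (large_rows (switch (E1 \<union> E2) \<sigma>) \<inter> I) < q}
    \<le> card {S. S \<subseteq> I \<and> card S < q}"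
proof -
  let ?C = "{E1. E1 \<subseteq> hit_cell \<sigma> ` I \<and> card (large_rows (switch (E1 \<union> E2) \<sigma>) \<inter> I) < q}"
  have IR: "I \<subseteq> hit_rows \<sigma>" using ind unfolding independent_def by auto
  have finI: "finite I" using IR finite_hit_rows by (rule finite_subset)
  define psi where "psi E1 = {i \<in> I. hit_cell \<sigma> i \<in> E1 \<longleftrightarrow>
      h \<le> cmod (entry (switch (insert (hit_cell \<sigma> i) E2) \<sigma>) i)}" for E1
  have "inj_on psi ?C"
  proof (rule inj_onI)
    fix E1 E1' assume "E1 \<in> ?C" "E1' \<in> ?C" and eq: "psi E1 = psi E1'"
    have "(hit_cell \<sigma> i \<in> E1) = (hit_cell \<sigma> i \<in> E1')" if i: "i \<in> I" for i
      using eq i unfolding psi_def by blast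
    thus "E1 = E1'" using \<open>E1 \<in> ?C\<close> \<open>E1' \<in> ?C\<close> by blast
  qed
  moreover have "psi ` ?C \<subseteq> {S. S \<subseteq> I \<and> card S < q}"
  proof clarify
    fix E1 assume E1: "E1 \<subseteq> hit_cell \<sigma> ` I" and c: "card (large_rows (switch (E1 \<union> E2) \<sigma>) \<inter> I) < q"
    have "psi E1 \<subseteq> large_rows (switch (E1 \<union> E2) \<sigma>) \<inter> I"
      using large_entry_switch_union[OF \<sigma> ind _ E1 E2] IR
      unfolding psi_def large_rows_def hit_rows_def by auto
    hence "card (psi E1) \<le> card (large_rows (switch (E1 \<union> E2) \<sigma>) \<inter> I)"
      using finI by (intro card_mono) auto
    thus "psi E1 \<subseteq> I \<and> card (psi E1) < q" using c unfolding psi_def by auto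
  qed
  moreover have "finite {S. S \<subseteq> I \<and> card S < q}"
    using finI by (auto intro: finite_subset[of _ "Pow I"])
  ultimately show ?thesis by (rule card_inj_on_le)
qed

lemma card_switches_few_large_le:
  assumes \<sigma>: "\<sigma> \<in> tuples" and ind: "independent \<sigma> I"
  shows "card {E. E \<subseteq> cells \<and> card (large_rows (switch E \<sigma>) \<inter> I) < q}
    \<le> 2 ^ (m * d - card I) * (\<Sum>j<q. card I choose j)"
proof -
  let ?D = "hit_cell \<sigma> ` I"
  have IR: "I \<subseteq> hit_rows \<sigma>" using ind unfolding independent_def by auto
  have DX: "?D \<subseteq> cells" using IR hit_cell_in_cells by auto
  have cD: "card ?D = card I"
    using inj_on_subset[OF inj_on_hit_cell[OF \<sigma>] IR] by (rule card_image)
  have "card {E. E \<subseteq> cells \<and> card (large_rows (switch E \<sigma>) \<inter> I) < q}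
      = (\<Sum>E2\<in>Pow (cells - ?D). card {E1. E1 \<subseteq> ?D \<and> card (large_rows (switch (E1 \<union> E2) \<sigma>) \<inter> I) < q})"
    by (rule card_subsets_split[OF finite_cells DX])
  also have "\<dots> \<le> (\<Sum>E2\<in>Pow (cells - ?D). card {S. S \<subseteq> I \<and> card S < q})"
    by (intro sum_mono card_cube_few_large_le[OF \<sigma> ind]) auto
  also have "\<dots> = 2 ^ (card cells - card ?D) * card {S. S \<subseteq> I \<and> card S < q}"
    using finite_cells DX by (simp add: card_Pow card_Diff_subset finite_subset)
  also have "card {S. S \<subseteq> I \<and> card S < q} = (\<Sum>j<q. card I choose j)"
    using IR finite_hit_rows by (intro card_subsets_card_less) (rule finite_subset)
  finally show ?thesis using cD card_cells by simp
qed

lemma card_bad_switches_le: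
  assumes "\<sigma> \<in> tuples" "independent \<sigma> I" and few: "\<forall>\<sigma>'\<in>tuples \<inter> B. card (large_rows \<sigma>') < q"
  shows "card {E. E \<subseteq> cells \<and> switch E \<sigma> \<in> B} \<le> 2 ^ (m * d - card I) * (\<Sum>j<q. card I choose j)"
proof -
  have "{E. E \<subseteq> cells \<and> switch E \<sigma> \<in> B} \<subseteq> {E. E \<subseteq> cells \<and> card (large_rows (switch E \<sigma>) \<inter> I) < q}"
  proof clarify
    fix E assume "E \<subseteq> cells" "switch E \<sigma> \<in> B"
    hence "card (large_rows (switch E \<sigma>)) < q" using few switch_in_tuples assms(1) by blast
    moreover have "card (large_rows (switch E \<sigma>) \<inter> I) \<le> card (large_rows (switch E \<sigma>))"
      by (intro card_mono) (auto simp: large_rows_def)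
    ultimately show "card (large_rows (switch E \<sigma>) \<inter> I) < q" by linarith
  qed
  hence "card {E. E \<subseteq> cells \<and> switch E \<sigma> \<in> B} \<le> card {E. E \<subseteq> cells \<and> card (large_rows (switch E \<sigma>) \<inter> I) < q}"
    by (intro card_mono) (use finite_cells in auto)
  also have "\<dots> \<le> 2 ^ (m * d - card I) * (\<Sum>j<q. card I choose j)"
    by (rule card_switches_few_large_le[OF assms(1,2)])
  finally show ?thesis .
qed

section \<open>The probability of the bad event\<close>

lemma card_few_hit_rows_le:
  assumes "s \<le> n"
  shows "real (card {\<sigma>\<in>tuples. card (hit_rows \<sigma>) \<le> s})
    \<le> real (n choose s) * ((real s / real n) ^ m * fact n) ^ d"
proof -
  define A where "A = a ` {..<m}"
  define Us where "Us = {U. U \<subseteq> {..<n} \<and> card U = s}"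
  let ?F = "perms_preimage_within {..<n}"
  have cA: "card A = m" unfolding A_def using a_inj by (simp add: card_image)
  have fUs: "finite Us" unfolding Us_def by auto
  have cUs: "card Us = n choose s" unfolding Us_def using n_subsets[of "{..<n}" s] by simp
  have "{\<sigma>\<in>tuples. card (hit_rows \<sigma>) \<le> s} \<subseteq> (\<Union>U\<in>Us. PiE {..<d} (\<lambda>_. ?F U A))"
  proof clarify
    fix \<sigma> assume \<sigma>: "\<sigma> \<in> tuples" "card (hit_rows \<sigma>) \<le> s"
    have "hit_rows \<sigma> \<subseteq> {..<n}" unfolding hit_rows_def by auto
    then obtain U where U: "hit_rows \<sigma> \<subseteq> U" "U \<subseteq> {..<n}" "card U = s"
      using exists_subset_between[of "hit_rows \<sigma>" s "{..<n}"] \<sigma>(2) assms by auto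
    have "\<sigma> l \<in> ?F U A" if "l < d" for l
      using tuples_permutes[OF \<sigma>(1) that] U that
      unfolding perms_preimage_within_def A_def hit_rows_def by auto
    hence "\<sigma> \<in> PiE {..<d} (\<lambda>_. ?F U A)"
      using \<sigma>(1) unfolding perm_tuples_def PiE_def by auto
    thus "\<sigma> \<in> (\<Union>U\<in>Us. PiE {..<d} (\<lambda>_. ?F U A))" using U unfolding Us_def by auto
  qed
  hence "card {\<sigma>\<in>tuples. card (hit_rows \<sigma>) \<le> s} \<le> card (\<Union>U\<in>Us. PiE {..<d} (\<lambda>_. ?F U A))"
    using fUs by (intro card_mono finite_UN_I finite_PiE finite_perms_preimage_within) auto
  also have "\<dots> \<le> (\<Sum>U\<in>Us. card (PiE {..<d} (\<lambda>_. ?F U A)))"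
    by (rule card_UN_le[OF fUs])
  finally have "real (card {\<sigma>\<in>tuples. card (hit_rows \<sigma>) \<le> s})
      \<le> (\<Sum>U\<in>Us. real (card (?F U A)) ^ d)"
    by (simp add: card_PiE flip: of_nat_sum of_nat_power)
  also have "\<dots> \<le> (\<Sum>U\<in>Us. ((real s / real n) ^ m * fact n) ^ d)"
    using card_perms_preimage_within_le[of "{..<n}" _ A] a_range cA
    by (intro sum_mono power_mono) (auto simp: Us_def A_def)
  also have "\<dots> = real (n choose s) * ((real s / real n) ^ m * fact n) ^ d" using cUs by simp
  finally show ?thesis .
qed

lemma card_few_hit_rows_le_exp:
  assumes "16 * s \<le> k" "k \<le> n" "k \<le> m * d" "0 < n"
  shows "real (card {\<sigma>\<in>tuples. card (hit_rows \<sigma>) \<le> s}) \<le> exp (- real k) * real (card tuples)"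
proof -
  have "real (card {\<sigma>\<in>tuples. card (hit_rows \<sigma>) \<le> s})
      \<le> real (n choose s) * ((real s / real n) ^ m * fact n) ^ d"
    using assms by (intro card_few_hit_rows_le) simp
  also have "\<dots> = real (n choose s) * (real s / real n) ^ (m * d) * real (card tuples)"
    by (simp add: card_tuples power_mult_distrib power_mult)
  also have "\<dots> \<le> exp (- real k) * real (card tuples)"
    using assms by (intro mult_right_mono choose_mult_power_le_exp) auto
  finally show ?thesis .
qed

lemma ratio_bad_le_average:
  assumes "\<And>\<sigma>. \<sigma> \<in> tuples \<Longrightarrow> real (card {E. E \<subseteq> cells \<and> switch E \<sigma> \<in> B}) \<le> f \<sigma>"
  shows "real (card (tuples \<inter> B)) / real (card tuples) \<le> (\<Sum>\<sigma>\<in>tuples. f \<sigma>) / (2 ^ (m * d) * real (card tuples))"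
proof -
  have "real (card (tuples \<inter> B)) * 2 ^ (m * d) \<le> (\<Sum>\<sigma>\<in>tuples. f \<sigma>)"
    using card_bad_mult_power_eq[of B, THEN arg_cong[where f = real]]
    by (simp add: sum_mono assms)
  moreover have "0 < real (card tuples)" using finite_tuples tuples_nonempty by (simp add: card_gt_0_iff)
  ultimately show ?thesis by (simp add: field_simps)
qed

lemma card_bad_switches_le_half:
  assumes "\<sigma> \<in> tuples" "0 < m" "0 < d" and none: "\<forall>\<sigma>'\<in>tuples \<inter> B. large_rows \<sigma>' = {}"
  shows "real (card {E. E \<subseteq> cells \<and> switch E \<sigma> \<in> B}) \<le> 2 ^ (m * d) / 2"
proof -
  obtain I where I: "independent \<sigma> I" "card (hit_rows \<sigma>) \<le> 3 * card I"
    using exists_independent[OF assms(1)] by blast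
  have "card (hit_rows \<sigma>) \<ge> 1"
    using hit_rows_nonempty[OF assms(1-3)] finite_hit_rows by (simp add: Suc_le_eq card_gt_0_iff)
  hence I1: "1 \<le> card I" using I(2) by simp
  have "card {E. E \<subseteq> cells \<and> switch E \<sigma> \<in> B} \<le> 2 ^ (m * d - card I) * (\<Sum>j<1. card I choose j)"
    using none by (intro card_bad_switches_le[OF assms(1) I(1)]) auto
  also have "\<dots> \<le> 2 ^ (m * d - 1)" using I1 by (simp add: power_increasing)
  finally have "real (card {E. E \<subseteq> cells \<and> switch E \<sigma> \<in> B}) \<le> 2 ^ (m * d - 1)"
    by (simp flip: of_nat_le_iff)
  also have "(2::real) ^ (m * d - 1) = 2 ^ (m * d) / 2"
    using assms(2,3) by (simp add: power_diff)
  finally show ?thesis .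
qed

text \<open>With k < 48 card I, q = card I div 8 + 1 exceeds the number of large rows of any bad
  tuple, so the bad switchings form a binomial tail of the cube.\<close>

lemma card_bad_switches_le_exp:
  assumes \<sigma>: "\<sigma> \<in> tuples" and hits: "k < 16 * card (hit_rows \<sigma>)"
    and few: "\<forall>\<sigma>'\<in>tuples \<inter> B. 3025 * card (large_rows \<sigma>') \<le> k"
  shows "real (card {E. E \<subseteq> cells \<and> switch E \<sigma> \<in> B}) \<le> 2 ^ (m * d) * (24 * exp (- real k / 384))"
proof -
  obtain I where I: "independent \<sigma> I" "card (hit_rows \<sigma>) \<le> 3 * card I"
    using exists_independent[OF \<sigma>] by blast
  define r where "r = card I"
  have kr: "k < 48 * r" using hits I(2) unfolding r_def by linarith
  have "\<forall>\<sigma>'\<in>tuples \<inter> B. card (large_rows \<sigma>') < r div 8 + 1"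
  proof
    fix \<sigma>' assume "\<sigma>' \<in> tuples \<inter> B"
    hence "3025 * card (large_rows \<sigma>') \<le> k" using few by blast
    hence "8 * card (large_rows \<sigma>') \<le> r" using kr by linarith
    thus "card (large_rows \<sigma>') < r div 8 + 1" by presburger
  qed
  hence "card {E. E \<subseteq> cells \<and> switch E \<sigma> \<in> B} \<le> 2 ^ (m * d - r) * (\<Sum>j<r div 8 + 1. r choose j)"
    unfolding r_def by (rule card_bad_switches_le[OF \<sigma> I(1)])
  hence "real (card {E. E \<subseteq> cells \<and> switch E \<sigma> \<in> B}) \<le> 2 ^ (m * d - r) * real (\<Sum>j<r div 8 + 1. r choose j)"
    unfolding of_nat_le_iff[symmetric, where 'a = real] by simp
  also have "\<dots> = 2 ^ (m * d) * (real (\<Sum>j<r div 8 + 1. r choose j) / 2 ^ r)"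
    using card_independent_le[OF \<sigma> I(1)] by (simp add: power_diff r_def)
  also have "\<dots> \<le> 2 ^ (m * d) * (8 * exp (- real (r div 8)))"
    by (intro mult_left_mono binomial_tail_le_exp) auto
  also have "\<dots> \<le> 2 ^ (m * d) * (24 * exp (- real k / 384))"
  proof -
    have "real k / 384 - 1 \<le> real (r div 8)" using kr by linarith
    hence "exp (- real (r div 8)) \<le> exp 1 * exp (- real k / 384)"
      by (simp flip: exp_add)
    also have "\<dots> \<le> 3 * exp (- real k / 384)" by (intro mult_right_mono exp_le) auto
    finally show ?thesis by simp
  qed
  finally show ?thesis .
qed

lemma card_switches_le: "real (card {E. E \<subseteq> cells \<and> P E}) \<le> 2 ^ (m * d)"
proof -
  have "card {E. E \<subseteq> cells \<and> P E} \<le> card (Pow cells)"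
    using finite_cells by (intro card_mono) auto
  thus ?thesis using finite_cells by (simp add: card_Pow card_cells mult.commute flip: of_nat_le_iff)
qed

lemma ratio_bad_le_half:
  assumes m: "0 < m" and d: "0 < d" and none: "\<forall>\<sigma>\<in>tuples \<inter> B. card (large_rows \<sigma>) = 0"
  shows "real (card (tuples \<inter> B)) / real (card tuples) \<le> 1 / 2"
proof -
  have "\<forall>\<sigma>\<in>tuples \<inter> B. large_rows \<sigma> = {}"
  proof
    fix \<sigma> assume "\<sigma> \<in> tuples \<inter> B"
    hence "card (large_rows \<sigma>) = 0" using none by blast
    moreover have "finite (large_rows \<sigma>)" unfolding large_rows_def by auto
    ultimately show "large_rows \<sigma> = {}" by simp
  qed
  hence "real (card (tuples \<inter> B)) / real (card tuples)
      \<le> (\<Sum>\<sigma>\<in>tuples. 2 ^ (m * d) / 2) / (2 ^ (m * d) * real (card tuples))"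
    by (intro ratio_bad_le_average card_bad_switches_le_half m d)
  also have "\<dots> = 1 / 2"
    using finite_tuples tuples_nonempty by (simp add: card_gt_0_iff)
  finally show ?thesis .
qed

text \<open>Tuples with at most k / 16 hit rows are rare and are counted separately; for every
  other tuple at most an e^(-k/384) fraction of its switchings is bad.\<close>

lemma ratio_bad_le_exp_384:
  assumes m: "0 < m" and k: "k \<le> m * d" "k \<le> n"
    and few: "\<forall>\<sigma>\<in>tuples \<inter> B. 3025 * card (large_rows \<sigma>) \<le> k"
  shows "real (card (tuples \<inter> B)) / real (card tuples) \<le> 25 * exp (- real k / 384)"
proof -
  define s where "s = k div 16"
  let ?few_hits = "{\<sigma>\<in>tuples. card (hit_rows \<sigma>) \<le> s}"
  let ?f = "\<lambda>\<sigma>. 2 ^ (m * d) * (24 * exp (- real k / 384)) + (if \<sigma> \<in> ?few_hits then 2 ^ (m * d) else 0)"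
  have "real (card (tuples \<inter> B)) / real (card tuples) \<le> (\<Sum>\<sigma>\<in>tuples. ?f \<sigma>) / (2 ^ (m * d) * real (card tuples))"
  proof (rule ratio_bad_le_average)
    fix \<sigma> assume \<sigma>: "\<sigma> \<in> tuples"
    show "real (card {E. E \<subseteq> cells \<and> switch E \<sigma> \<in> B}) \<le> ?f \<sigma>"
    proof (cases "\<sigma> \<in> ?few_hits")
      case True
      hence "(if \<sigma> \<in> ?few_hits then (2::real) ^ (m * d) else 0) = 2 ^ (m * d)" by simp
      moreover have "0 \<le> (2::real) ^ (m * d) * (24 * exp (- real k / 384))" by simp
      ultimately show ?thesis using card_switches_le[of "\<lambda>E. switch E \<sigma> \<in> B"] by linarith
    next
      case False
      hence "k < 16 * card (hit_rows \<sigma>)" using \<sigma> unfolding s_def by auto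
      thus ?thesis using card_bad_switches_le_exp[OF \<sigma> _ few] False by auto
    qed
  qed
  also have "\<dots> = 24 * exp (- real k / 384) + real (card ?few_hits) / real (card tuples)"
    using finite_tuples tuples_nonempty
    by (simp add: sum.distrib sum.If_cases Int_def card_gt_0_iff field_simps)
  also have "\<dots> \<le> 24 * exp (- real k / 384) + exp (- real k)"
  proof -
    have "real (card ?few_hits) \<le> exp (- real k) * real (card tuples)"
      using k n_pos[OF m] by (intro card_few_hit_rows_le_exp) (auto simp: s_def)
    thus ?thesis using finite_tuples tuples_nonempty by (simp add: divide_le_eq card_gt_0_iff)
  qed
  also have "\<dots> \<le> 25 * exp (- real k / 384)" by simp
  finally show ?thesis .
qed

lemma ratio_bad_le_exp:
  assumes m: "0 < m" and d: "0 < d" and k: "k = min (m * d) n"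
    and few: "\<forall>\<sigma>\<in>tuples \<inter> B. 3025 * card (large_rows \<sigma>) \<le> k"
  shows "real (card (tuples \<inter> B)) / real (card tuples) \<le> exp (- real k / 10000)"
proof (cases "k < 3025")
  case True
  have "real (card (tuples \<inter> B)) / real (card tuples) \<le> 1 / 2"
  proof (intro ratio_bad_le_half m d ballI)
    fix \<sigma> assume "\<sigma> \<in> tuples \<inter> B"
    hence "3025 * card (large_rows \<sigma>) \<le> k" using few by blast
    thus "card (large_rows \<sigma>) = 0" using True by linarith
  qed
  also have "\<dots> \<le> 1 + (- real k / 10000)" using True by simp
  also have "\<dots> \<le> exp (- real k / 10000)" by (rule exp_ge_add_one_self)
  finally show ?thesis .
next
  case False
  have "(2::real) ^ 5 \<le> exp 1 ^ 5" using exp_ge_add_one_self[of 1] by (intro power_mono) auto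
  also have "\<dots> \<le> exp (real k / 384 - real k / 10000)"
    using False by (simp flip: exp_of_nat_mult)
  finally have "25 * exp (- real k / 384)
      \<le> exp (real k / 384 - real k / 10000) * exp (- real k / 384)"
    by (intro mult_right_mono) auto
  also have "\<dots> = exp (- real k / 10000)" by (simp flip: exp_add)
  finally show ?thesis using ratio_bad_le_exp_384[OF m _ _ few] k by simp
qed

lemma card_large_rows_le_vnorm:
  assumes "0 \<le> h" "\<forall>i<n. v i = entry \<sigma> i"
  shows "real (card (large_rows \<sigma>)) * h ^ 2 \<le> vnorm n v ^ 2"
proof -
  have "real (card (large_rows \<sigma>)) * h ^ 2 = (\<Sum>i\<in>large_rows \<sigma>. h ^ 2)" by simp
  also have "\<dots> \<le> (\<Sum>i\<in>large_rows \<sigma>. cmod (v i) ^ 2)"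
  proof (rule sum_mono)
    fix i assume "i \<in> large_rows \<sigma>"
    hence "h \<le> cmod (v i)" "0 \<le> h" using assms unfolding large_rows_def by auto
    thus "h ^ 2 \<le> cmod (v i) ^ 2" by (intro power_mono)
  qed
  also have "\<dots> \<le> (\<Sum>i<n. cmod (v i) ^ 2)" by (rule sum_mono2) (auto simp: large_rows_def)
  also have "\<dots> = vnorm n v ^ 2" unfolding vnorm_def by (simp add: sum_nonneg)
  finally show ?thesis .
qed

text \<open>The constant 3025 = (110 / 2)^2 balances the threshold of the bad event against h.\<close>

lemma card_large_rows_le_of_vnorm_le:
  assumes h: "h = \<rho> / (2 * sqrt (real n))" and \<rho>: "0 < \<rho>" and n: "0 < n"
    and v: "\<forall>i<n. v i = entry \<sigma> i" and small: "vnorm n v \<le> 1/110 * \<rho> * sqrt (real k / real n)"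
  shows "3025 * card (large_rows \<sigma>) \<le> k"
proof -
  have "\<rho>^2 / (4 * real n) * real (card (large_rows \<sigma>)) = real (card (large_rows \<sigma>)) * h ^ 2"
    unfolding h using n by (simp add: power_divide power_mult_distrib)
  also have "\<dots> \<le> vnorm n v ^ 2"
    using v \<rho> h by (intro card_large_rows_le_vnorm) auto
  also have "\<dots> \<le> (1/110 * \<rho> * sqrt (real k / real n)) ^ 2"
    using small by (intro power_mono) (auto simp: vnorm_def sum_nonneg)
  also have "\<dots> = \<rho>^2 / (4 * real n) * (real k / 3025)"
    by (simp add: power_mult_distrib power_divide)
  finally have "real (card (large_rows \<sigma>)) \<le> real k / 3025"
    by (rule mult_left_le_imp_le) (use n \<rho> in simp)
  thus ?thesis by linarith
qed

end

lemma mat_vec_S_mat_plus: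
  assumes "ps \<in> perm_tuples n d" "i < n"
  shows "mat_vec n (\<lambda>i j. S_mat d ps i j + Z i j) u i = (\<Sum>l<d. u (ps l i)) + mat_vec n Z u i"
proof -
  have "(\<Sum>j<n. S_mat d ps i j * u j) = (\<Sum>l<d. \<Sum>j<n. (if ps l i = j then 1 else 0) * u j)"
    unfolding S_mat_def perm_mat_def sum_distrib_right by (rule sum.swap)
  also have "\<dots> = (\<Sum>l<d. u (ps l i))"
  proof (rule sum.cong[OF refl])
    fix l assume "l \<in> {..<d}"
    hence "ps l permutes {..<n}" using assms(1) unfolding perm_tuples_def by auto
    hence "ps l i < n" using assms(2) permutes_in_image by fastforce
    have "(\<Sum>j<n. (if ps l i = j then 1 else 0) * u j) = (\<Sum>j<n. if ps l i = j then u (ps l i) else 0)"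
      by (intro sum.cong) auto
    also have "\<dots> = u (ps l i)" using \<open>ps l i < n\<close> by simp
    finally show "(\<Sum>j<n. (if ps l i = j then 1 else 0) * u j) = u (ps l i)" .
  qed
  finally show ?thesis unfolding mat_vec_def by (simp add: distrib_right sum.distrib)
qed

lemma min_sqrt_eq_sqrt_min:
  assumes "0 < n"
  shows "min (sqrt (real m * real d / real n)) 1 = sqrt (real (min (m * d) n) / real n)"
  using assms by (cases "m * d \<le> n") (auto simp: min_def field_simps simp flip: of_nat_mult)

lemma prob_small_vnorm_le:
  fixes Z :: "nat \<Rightarrow> nat \<Rightarrow> complex" and u :: "nat \<Rightarrow> complex"
  assumes d: "1 \<le> d" and J: "J1 \<subseteq> {..<n}" "J2 \<subseteq> {..<n}" "J1 \<inter> J2 = {}"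
    and m: "card J1 = m" "card J2 = m" and \<rho>: "0 < \<rho>"
    and sep: "\<forall>j1\<in>J1. \<forall>j2\<in>J2. \<rho> / sqrt (real n) \<le> cmod (u j1 - u j2)"
  shows "measure_pmf.prob (perm_space n d)
      {ps. vnorm n (mat_vec n (\<lambda>i j. S_mat d ps i j + Z i j) u)
         \<le> 1/110 * \<rho> * min (sqrt (real m * real d / real n)) 1}
    \<le> exp (- (1/10000) * real (min (m * d) n))"
proof (cases "m = 0")
  case True
  then show ?thesis by (simp add: measure_pmf.prob_le_1)
next
  case False
  obtain a where a: "bij_betw a {..<m} J1"
    using ex_bij_betw_nat_finite[of J1] J(1) m(1) finite_subset by (auto simp: atLeast0LessThan)
  obtain b where b: "bij_betw b {..<m} J2"
    using ex_bij_betw_nat_finite[of J2] J(2) m(2) finite_subset by (auto simp: atLeast0LessThan)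
  define h where "h = \<rho> / (2 * sqrt (real n))"
  interpret switching n d m a b u "mat_vec n Z u" h
    using a b J sep by unfold_locales (auto simp: bij_betw_def h_def)
  have n: "0 < n" using n_pos False by simp
  define k where "k = min (m * d) n"
  define B where "B = {ps. vnorm n (mat_vec n (\<lambda>i j. S_mat d ps i j + Z i j) u)
      \<le> 1/110 * \<rho> * min (sqrt (real m * real d / real n)) 1}"
  have "\<forall>\<sigma>\<in>tuples \<inter> B. 3025 * card (large_rows \<sigma>) \<le> k"
  proof
    fix \<sigma> assume "\<sigma> \<in> tuples \<inter> B"
    then show "3025 * card (large_rows \<sigma>) \<le> k"
      using \<rho> n unfolding B_def k_def min_sqrt_eq_sqrt_min[OF n]
      by (intro card_large_rows_le_of_vnorm_le[OF h_def, where v = "mat_vec n (\<lambda>i j. S_mat d \<sigma> i j + Z i j) u"])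
         (auto simp: entry_def mat_vec_S_mat_plus)
  qed
  hence "real (card (tuples \<inter> B)) / real (card tuples) \<le> exp (- real k / 10000)"
    using False d by (intro ratio_bad_le_exp) (auto simp: k_def)
  moreover have "measure_pmf.prob (perm_space n d) B = real (card (tuples \<inter> B)) / real (card tuples)"
    unfolding perm_space_def using finite_tuples tuples_nonempty by (simp add: measure_pmf_of_set)
  ultimately show ?thesis unfolding B_def k_def by simp
qed

theorem lemma3p1:
  shows "\<exists>c cbar :: real. c > 0 \<and> cbar > 0 \<and>
    (\<forall>(\<gamma>0::real) (n::nat) (d::nat) (Z :: nat \<Rightarrow> nat \<Rightarrow> complex) (\<zeta>::complex)
       (u :: nat \<Rightarrow> complex) (J1 :: nat set) (J2 :: nat set) (m::nat) (\<rho>::real).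
      \<gamma>0 \<ge> 1 \<longrightarrow> d \<ge> 1 \<longrightarrow>
      (\<forall>i<n. (\<Sum>j<n. Z i j) = \<zeta>) \<longrightarrow>
      (\<forall>j<n. (\<Sum>i<n. cnj (Z i j)) = cnj \<zeta>) \<longrightarrow>
      (\<forall>v. vnorm n v = 1 \<longrightarrow> (\<Sum>j<n. v j) = 0 \<longrightarrow>
            vnorm n (mat_vec n Z v) \<le> real n powr \<gamma>0) \<longrightarrow>
      J1 \<subseteq> {..<n} \<longrightarrow> J2 \<subseteq> {..<n} \<longrightarrow> J1 \<inter> J2 = {} \<longrightarrow>
      card J1 = m \<longrightarrow> card J2 = m \<longrightarrow> \<rho> > 0 \<longrightarrow>
      (\<forall>j1\<in>J1. \<forall>j2\<in>J2. cmod (u j1 - u j2) \<ge> \<rho> / sqrt (real n)) \<longrightarrow>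
      measure_pmf.prob (perm_space n d)
        {ps. vnorm n (mat_vec n (\<lambda>i j. S_mat d ps i j + Z i j) u)
               \<le> c * \<rho> * min (sqrt (real m * real d / real n)) 1}
      \<le> exp (- cbar * real (min (m * d) n)))"
proof (intro exI conjI allI impI)
  show "(0::real) < 1/110" "(0::real) < 1/10000" by simp_all
next
  fix \<gamma>0 :: real and n d :: nat and Z :: "nat \<Rightarrow> nat \<Rightarrow> complex" and \<zeta> u J1 J2 m \<rho>
  assume "1 \<le> d" "J1 \<subseteq> {..<n}" "J2 \<subseteq> {..<n}" "J1 \<inter> J2 = {}" "card J1 = m" "card J2 = m"
    "0 < \<rho>" "\<forall>j1\<in>J1. \<forall>j2\<in>J2. \<rho> / sqrt (real n) \<le> cmod (u j1 - u j2)"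
  then show "measure_pmf.prob (perm_space n d)
        {ps. vnorm n (mat_vec n (\<lambda>i j. S_mat d ps i j + Z i j) u)
               \<le> 1/110 * \<rho> * min (sqrt (real m * real d / real n)) 1}
      \<le> exp (- (1/10000) * real (min (m * d) n))"
    by (rule prob_small_vnorm_le)
qed

end
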